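(* Let $n\ge1$, $p$ a prime, and for $m\ge1$ let $Y_m$ be the subspace of $\Sigma(n,p)$ spanned by all $\overline{B}_q$ where $q$ has at least $m$ components. Then for every $m\ge1$, $Y_m\,\mathcal{R}(n,p)\subseteq Y_{m+1}$, where $\mathcal{R}(n,p)$ is the radical of $\Sigma(n,p)$.
   Context: A composition of $n$ is a sequence of positive integers with sum $n$. The descent algebra $\Sigma_n$ has basis $\{B_q\}$ indexed by compositions of $n$ with multiplication $B_qB_r=\sum_{Z\in S(q,r)}B_{c(Z)}$, where for $q=[a_1,\dots,a_s]$, $r=[b_1,\dots,b_t]$, $S(q,r)$ is the set of $s\times t$ non-negative integer matrices with row sums $a_i$ and column sums $b_j$, and $c(Z)$ is the composition obtained by reading the entries of $Z$ row by row and omitting zeros. Let $\mathcal{Z}_n$ be the subring of integral combinations of the $B_q$ and $\Sigma(n,p)=\mathcal{Z}_n/p\mathcal{Z}_n$, an $\mathbb{F}_p$-algebra with basis $\overline{B}_q$ (images of $B_q$); $\mathcal{R}(n,p)$ denotes its (Jacobson) radical. For a subspace $Y$ and ideal $\mathcal{R}$, $Y\mathcal{R}$ denotes the span of all products $yx$ with $y\in Y$, $x\in\mathcal{R}$. *)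

theory Defs
  imports "HOL-Computational_Algebra.Primes"
begin

definition comps :: "nat \<Rightarrow> nat list set" where
  "comps n = {q. 0 \<notin> set q \<and> sum_list q = n}"

definition smats :: "nat list \<Rightarrow> nat list \<Rightarrow> nat list list set" where
  "smats q r = {Z. length Z = length q \<and>
      (\<forall>i<length q. length (Z!i) = length r \<and> sum_list (Z!i) = q!i) \<and>
      (\<forall>j<length r. (\<Sum>i<length q. Z!i!j) = r!j)}"

definition cZ :: "nat list list \<Rightarrow> nat list" where
  "cZ Z = filter (\<lambda>x. x \<noteq> 0) (concat Z)"

text \<open>Structure constant: coefficient of B_w in B_q B_r.\<close>
definition mcoef :: "nat list \<Rightarrow> nat list \<Rightarrow> nat list \<Rightarrow> nat" where
  "mcoef q r w = card {Z \<in> smats q r. cZ Z = w}"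

text \<open>Elements of Sigma(n,p) = Z_n / p Z_n: coefficient functions on compositions of n,
  with values in {0..<p} (residues mod p), zero outside compositions of n.
  The function f represents sum_q f(q) * (image of B_q).\<close>
definition sig :: "nat \<Rightarrow> nat \<Rightarrow> (nat list \<Rightarrow> int) set" where
  "sig n p = {f. \<forall>q. f q \<in> {0..<int p} \<and> (q \<notin> comps n \<longrightarrow> f q = 0)}"

definition sadd :: "nat \<Rightarrow> nat \<Rightarrow> (nat list \<Rightarrow> int) \<Rightarrow> (nat list \<Rightarrow> int) \<Rightarrow> (nat list \<Rightarrow> int)" where
  "sadd n p f g = (\<lambda>w. if w \<in> comps n then (f w + g w) mod int p else 0)"

definition ssub :: "nat \<Rightarrow> nat \<Rightarrow> (nat list \<Rightarrow> int) \<Rightarrow> (nat list \<Rightarrow> int) \<Rightarrow> (nat list \<Rightarrow> int)" where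
  "ssub n p f g = (\<lambda>w. if w \<in> comps n then (f w - g w) mod int p else 0)"

definition ssmul :: "nat \<Rightarrow> nat \<Rightarrow> int \<Rightarrow> (nat list \<Rightarrow> int) \<Rightarrow> (nat list \<Rightarrow> int)" where
  "ssmul n p c f = (\<lambda>w. if w \<in> comps n then (c * f w) mod int p else 0)"

definition szero :: "nat list \<Rightarrow> int" where
  "szero = (\<lambda>w. 0)"

text \<open>Multiplication induced by B_q B_r = sum_{Z in S(q,r)} B_{c(Z)}, reduced mod p.\<close>
definition smult :: "nat \<Rightarrow> nat \<Rightarrow> (nat list \<Rightarrow> int) \<Rightarrow> (nat list \<Rightarrow> int) \<Rightarrow> (nat list \<Rightarrow> int)" where
  "smult n p f g = (\<lambda>w. if w \<in> comps n then
      (\<Sum>q\<in>comps n. \<Sum>r\<in>comps n. f q * g r * int (mcoef q r w)) mod int p else 0)"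

text \<open>Identity element: the image of B_[n].\<close>
definition sone :: "nat \<Rightarrow> nat \<Rightarrow> nat list \<Rightarrow> int" where
  "sone n p = (\<lambda>w. if w = [n] then 1 mod int p else 0)"

text \<open>Jacobson radical, via the standard element-wise characterization:
  x is in J(A) iff 1 - y x is left invertible for every y in A.\<close>
definition jrad :: "nat \<Rightarrow> nat \<Rightarrow> (nat list \<Rightarrow> int) set" where
  "jrad n p = {x \<in> sig n p. \<forall>y\<in>sig n p. \<exists>z\<in>sig n p.
      smult n p z (ssub n p (sone n p) (smult n p y x)) = sone n p}"

definition Yspace :: "nat \<Rightarrow> nat \<Rightarrow> nat \<Rightarrow> (nat list \<Rightarrow> int) set" where
  "Yspace n p m = {f \<in> sig n p. \<forall>q. length q < m \<longrightarrow> f q = 0}"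

inductive_set prodspan :: "nat \<Rightarrow> nat \<Rightarrow> (nat list \<Rightarrow> int) set \<Rightarrow> (nat list \<Rightarrow> int) set
    \<Rightarrow> (nat list \<Rightarrow> int) set"
  for n p Y R where
  zero: "szero \<in> prodspan n p Y R"
| prod: "y \<in> Y \<Longrightarrow> x \<in> R \<Longrightarrow> smult n p y x \<in> prodspan n p Y R"
| add: "a \<in> prodspan n p Y R \<Longrightarrow> b \<in> prodspan n p Y R \<Longrightarrow> sadd n p a b \<in> prodspan n p Y R"
| smul: "a \<in> prodspan n p Y R \<Longrightarrow> ssmul n p c a \<in> prodspan n p Y R"

end

theory Submission
  imports Defs "HOL-Number_Theory.Cong" "HOL-Library.FuncSet"
begin

(* For a composition w, the coefficient of B_w in B_w B_r counts the maps from the parts of w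
   to the parts of r under which the parts of w lying over r_k add up to r_k.  Pairing two such
   maps, a Mackey-type double count shows that these diagonal coefficients are multiplicative in r,
   so f \<mapsto> (coefficient of B_w in B_w f) is a ring homomorphism from Sigma(n,p) to F_p; as it
   preserves 1, it kills the radical.  On the other hand B_q B_r only involves B_c(Z) with c(Z) at
   least as long as q, and of the same length only if c(Z) = q.  Hence, for y in Y_m and w with at
   most m parts, the coefficient of B_w in y x is y_w times the value of that homomorphism at x,
   which vanishes for x in the radical. *)

lemma sum_list_conv_sum_lessThan: "sum_list xs = (\<Sum>i<length xs. xs ! i)"
  by (simp add: sum_list_sum_nth atLeast0LessThan)

lemma sum_list_concat: "sum_list (concat xss) = sum_list (map sum_list (xss :: 'a::monoid_add list list))"
  by (induction xss) auto

lemma sum_list_filter_nonzero: "sum_list (filter (\<lambda>x. x \<noteq> 0) xs) = sum_list (xs :: 'a::monoid_add list)"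
  by (induction xs) auto

lemma length_le_sum_list: "0 \<notin> set xs \<Longrightarrow> length xs \<le> sum_list (xs :: nat list)"
  by (induction xs) (auto simp: Suc_le_eq)

lemma length_filter_nonzero_concat:
  assumes "\<forall>y\<in>set Z. sum_list y > (0::nat)"
  shows "length Z \<le> length (filter (\<lambda>x. x \<noteq> 0) (concat Z)) \<and>
    (length (filter (\<lambda>x. x \<noteq> 0) (concat Z)) = length Z \<longrightarrow>
      (\<forall>y\<in>set Z. length (filter (\<lambda>x. x \<noteq> 0) y) = 1))"
  using assms
proof (induction Z)
  case (Cons y Z)
  have "length (filter (\<lambda>x. x \<noteq> 0) y) \<ge> 1"
    using Cons.prems by (induction y) auto
  with Cons show ?case by auto
qed simp

definition unit_row :: "nat \<Rightarrow> nat \<Rightarrow> nat \<Rightarrow> nat list" where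
  "unit_row j c t = map (\<lambda>k. if k = j then c else 0) [0..<t]"

lemma length_unit_row [simp]: "length (unit_row j c t) = t"
  by (simp add: unit_row_def)

lemma nth_unit_row: "k < t \<Longrightarrow> unit_row j c t ! k = (if k = j then c else 0)"
  by (simp add: unit_row_def)

lemma sum_list_unit_row: "j < t \<Longrightarrow> sum_list (unit_row j c t) = c"
  by (simp add: unit_row_def sum_list_conv_sum_lessThan)

lemma filter_nonzero_unit_row:
  assumes "j < t" "c \<noteq> 0"
  shows "filter (\<lambda>x. x \<noteq> 0) (unit_row j c t) = [c]"
proof -
  have "filter (\<lambda>k. k = j) [0..<t] = [j]"
    using assms(1) by (induction t) auto
  then show ?thesis
    using assms(2) by (simp add: unit_row_def filter_map comp_def)
qed

lemma unit_row_inject: "unit_row j c t = unit_row j' c t \<Longrightarrow> j < t \<Longrightarrow> c \<noteq> 0 \<Longrightarrow> j = j'"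
  by (metis nth_unit_row)

lemma unit_rowI:
  assumes "length (filter (\<lambda>x. x \<noteq> 0) y) = 1"
  shows "\<exists>j<length y. y = unit_row j (sum_list y) (length y)"
proof -
  obtain j where j: "{i. i < length y \<and> y ! i \<noteq> 0} = {j}"
    using assms card_1_singletonE unfolding length_filter_conv_card by blast
  then have zero: "y ! k = 0" if "k < length y" "k \<noteq> j" for k
    using that by blast
  have "j < length y" using j by blast
  have "sum_list y = y ! j"
    using \<open>j < length y\<close> zero
    by (simp add: sum_list_conv_sum_lessThan sum.remove[of _ j] sum.neutral)
  then have "y = unit_row j (sum_list y) (length y)"
    using zero by (intro nth_equalityI) (auto simp: nth_unit_row)
  with \<open>j < length y\<close> show ?thesis by blast
qed

lemma smats_row_sums: "Z \<in> smats q r \<Longrightarrow> map sum_list Z = q"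
  unfolding smats_def by (auto intro: nth_equalityI)

lemma finite_comps: "finite (comps n)"
proof -
  have "comps n \<subseteq> {xs. set xs \<subseteq> {..n} \<and> length xs \<le> n}"
    unfolding comps_def using length_le_sum_list member_le_sum_list by fastforce
  then show ?thesis
    using finite_lists_length_le finite_subset by blast
qed

lemma finite_smats: "finite (smats q r)"
proof -
  let ?rows = "{xs. set xs \<subseteq> {..sum_list q} \<and> length xs = length r}"
  have "set Z \<subseteq> ?rows" if Z: "Z \<in> smats q r" for Z
  proof
    fix y assume y: "y \<in> set Z"
    then have "sum_list y \<in> set q"
      using smats_row_sums[OF Z] by fastforce
    then have "set y \<subseteq> {..sum_list q}"
      by (auto intro: order_trans[OF member_le_sum_list] member_le_sum_list)
    moreover have "length y = length r"
      using Z y unfolding smats_def by (auto simp: in_set_conv_nth)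
    ultimately show "y \<in> ?rows" by simp
  qed
  then have "smats q r \<subseteq> {Z. set Z \<subseteq> ?rows \<and> length Z = length q}"
    by (auto simp: smats_def)
  then show ?thesis
    by (rule finite_subset) (intro finite_lists_length_eq, simp)
qed

lemma cZ_in_comps:
  assumes "q \<in> comps n" and "Z \<in> smats q r"
  shows "cZ Z \<in> comps n"
proof -
  have "sum_list (cZ Z) = sum_list (concat Z)"
    unfolding cZ_def by (rule sum_list_filter_nonzero)
  with assms show ?thesis
    by (simp add: comps_def cZ_def sum_list_concat smats_row_sums)
qed

lemma length_cZ_smats:
  assumes Z: "Z \<in> smats q r" and q: "0 \<notin> set q"
  shows "length q \<le> length (cZ Z)"
    and "length (cZ Z) = length q \<Longrightarrow>
      \<forall>i<length q. \<exists>j<length r. Z ! i = unit_row j (q ! i) (length r)"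
proof -
  have rows: "map sum_list Z = q"
    using Z by (rule smats_row_sums)
  then have "\<forall>y\<in>set Z. sum_list y > 0"
    using q by (metis gr0I image_eqI list.set_map)
  note filter_length = length_filter_nonzero_concat[OF this, folded cZ_def]
  show "length q \<le> length (cZ Z)"
    using filter_length rows by auto
  assume "length (cZ Z) = length q"
  then have "\<forall>y\<in>set Z. length (filter (\<lambda>x. x \<noteq> 0) y) = 1"
    using filter_length rows by auto
  moreover have "length (Z ! i) = length r" if "i < length q" for i
    using Z that unfolding smats_def by auto
  ultimately show "\<forall>i<length q. \<exists>j<length r. Z ! i = unit_row j (q ! i) (length r)"
    using rows unit_rowI by (metis length_map nth_map nth_mem)
qed

lemma cZ_unit_rows:
  assumes "length Z = length q" and "0 \<notin> set q"
    and "\<forall>i<length q. \<exists>j<t. Z ! i = unit_row j (q ! i) t"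
  shows "cZ Z = q"
proof -
  have "filter (\<lambda>x. x \<noteq> 0) (Z ! i) = [q ! i]" if "i < length q" for i
    using assms(2,3) that filter_nonzero_unit_row by (metis nth_mem)
  then have "map (filter (\<lambda>x. x \<noteq> 0)) Z = map (\<lambda>x. [x]) q"
    using assms(1) by (intro nth_equalityI) auto
  then show ?thesis
    unfolding cZ_def filter_concat by simp
qed

lemma mcoef_triangular:
  assumes q: "q \<in> comps n" and nz: "mcoef q r w \<noteq> 0"
  shows "length q \<le> length w" and "length w = length q \<Longrightarrow> w = q"
proof -
  have "{Z \<in> smats q r. cZ Z = w} \<noteq> {}"
    using nz unfolding mcoef_def by (metis card.empty)
  then obtain Z where Z: "Z \<in> smats q r" "cZ Z = w"
    by blast
  have q0: "0 \<notin> set q" using q by (simp add: comps_def)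
  show "length q \<le> length w"
    using length_cZ_smats(1)[OF Z(1) q0] Z(2) by simp
  assume "length w = length q"
  then show "w = q"
    using length_cZ_smats(2)[OF Z(1) q0] cZ_unit_rows[of Z q] Z q0
    by (auto simp: smats_def)
qed

definition fibre_weight :: "nat list \<Rightarrow> (nat \<Rightarrow> 'a) \<Rightarrow> 'a \<Rightarrow> nat" where
  "fibre_weight w f a = (\<Sum>i<length w. if f i = a then w ! i else 0)"

definition weighted_maps :: "nat list \<Rightarrow> 'a set \<Rightarrow> ('a \<Rightarrow> nat) \<Rightarrow> (nat \<Rightarrow> 'a) set" where
  "weighted_maps w A v = {f \<in> {..<length w} \<rightarrow>\<^sub>E A. \<forall>a\<in>A. fibre_weight w f a = v a}"

lemma fibre_weight_cong:
  "(\<And>i. i < length w \<Longrightarrow> f i = a \<longleftrightarrow> g i = b) \<Longrightarrow> fibre_weight w f a = fibre_weight w g b"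
  unfolding fibre_weight_def by (rule sum.cong) auto

lemma nth_le_fibre_weight: "i < length w \<Longrightarrow> w ! i \<le> fibre_weight w f (f i)"
  unfolding fibre_weight_def by (rule order_trans[OF _ member_le_sum[of i]]) auto

lemma fibre_weight_outside:
  "(\<And>i. i < length w \<Longrightarrow> f i \<in> A) \<Longrightarrow> b \<notin> A \<Longrightarrow> fibre_weight w f b = 0"
  unfolding fibre_weight_def by (rule sum.neutral) auto

lemma fibre_weight_fst:
  assumes "finite K" and "\<And>i. i < length w \<Longrightarrow> g i \<in> K"
  shows "fibre_weight w f a = (\<Sum>k\<in>K. fibre_weight w (\<lambda>i. (f i, g i)) (a, k))"
proof -
  have "(\<Sum>k\<in>K. if (f i, g i) = (a, k) then w ! i else 0) = (if f i = a then w ! i else 0)"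
    if "i < length w" for i
    using assms that by (simp add: sum.delta)
  then show ?thesis
    unfolding fibre_weight_def by (subst sum.swap) simp
qed

lemma fibre_weight_snd:
  assumes "finite J" and "\<And>i. i < length w \<Longrightarrow> f i \<in> J"
  shows "fibre_weight w g b = (\<Sum>j\<in>J. fibre_weight w (\<lambda>i. (f i, g i)) (j, b))"
proof -
  have "fibre_weight w (\<lambda>i. (g i, f i)) (b, j) = fibre_weight w (\<lambda>i. (f i, g i)) (j, b)" for j
    by (rule fibre_weight_cong) auto
  then show ?thesis
    using fibre_weight_fst[where f = g and g = f and a = b, OF assms] by simp
qed

lemma finite_weighted_maps: "finite A \<Longrightarrow> finite (weighted_maps w A v)"
  unfolding weighted_maps_def
  by (rule finite_subset[of _ "{..<length w} \<rightarrow>\<^sub>E A"]) (auto intro: finite_PiE)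

lemma weighted_maps_positive:
  assumes "f \<in> weighted_maps w A v" and "0 \<notin> set w" and "i < length w"
  shows "v (f i) > 0"
proof -
  have "w ! i > 0"
    using assms(2,3) by (metis gr0I nth_mem)
  then have "fibre_weight w f (f i) > 0"
    using nth_le_fibre_weight[OF assms(3)] by (rule less_le_trans)
  moreover have "f i \<in> A"
    using assms(1,3) unfolding weighted_maps_def by auto
  ultimately show ?thesis
    using assms(1) unfolding weighted_maps_def by auto
qed

lemma inj_on_restrict_comp:
  assumes "inj_on \<phi> A"
  shows "inj_on (\<lambda>f. \<lambda>i\<in>I. \<phi> (f i)) (I \<rightarrow>\<^sub>E A)"
proof (rule inj_onI, rule PiE_ext)
  fix f g i assume "f \<in> I \<rightarrow>\<^sub>E A" "g \<in> I \<rightarrow>\<^sub>E A" "i \<in> I"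
    and "(\<lambda>i\<in>I. \<phi> (f i)) = (\<lambda>i\<in>I. \<phi> (g i))"
  then show "f i = g i"
    using assms by (metis PiE_mem inj_onD restrict_apply')
qed

lemma fibre_weight_restrict_comp:
  assumes "inj_on \<phi> A" and "f \<in> {..<length w} \<rightarrow>\<^sub>E A" and "a \<in> A"
  shows "fibre_weight w (\<lambda>i\<in>{..<length w}. \<phi> (f i)) (\<phi> a) = fibre_weight w f a"
  using assms by (intro fibre_weight_cong) (auto dest: inj_onD)

lemma restrict_comp_in_weighted_maps:
  assumes inj: "inj_on \<phi> A" and into: "\<phi> ` A \<subseteq> B"
    and val: "\<And>a. a \<in> A \<Longrightarrow> vB (\<phi> a) = vA a"
    and zero: "\<And>b. b \<in> B - \<phi> ` A \<Longrightarrow> vB b = 0"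
    and f: "f \<in> weighted_maps w A vA"
  shows "(\<lambda>i\<in>{..<length w}. \<phi> (f i)) \<in> weighted_maps w B vB"
proof -
  let ?h = "\<lambda>i\<in>{..<length w}. \<phi> (f i)"
  have fA: "f \<in> {..<length w} \<rightarrow>\<^sub>E A"
    using f unfolding weighted_maps_def by simp
  have "fibre_weight w ?h b = vB b" if "b \<in> B" for b
  proof (cases "b \<in> \<phi> ` A")
    case True
    then obtain a where "a \<in> A" and "b = \<phi> a"
      by blast
    then show ?thesis
      using fibre_weight_restrict_comp[OF inj fA] f val unfolding weighted_maps_def by auto
  next
    case False
    have "fibre_weight w ?h b = 0"
      by (rule fibre_weight_outside[of w ?h "\<phi> ` A"]) (use fA False in auto)
    with zero that False show ?thesis
      by auto
  qed
  moreover have "?h \<in> {..<length w} \<rightarrow>\<^sub>E B"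
    using fA into by auto
  ultimately show ?thesis
    unfolding weighted_maps_def by auto
qed

lemma weighted_maps_in_image_restrict_comp:
  assumes inj: "inj_on \<phi> A" and into: "\<phi> ` A \<subseteq> B"
    and val: "\<And>a. a \<in> A \<Longrightarrow> vB (\<phi> a) = vA a"
    and zero: "\<And>b. b \<in> B - \<phi> ` A \<Longrightarrow> vB b = 0"
    and w: "0 \<notin> set w" and h: "h \<in> weighted_maps w B vB"
  shows "h \<in> (\<lambda>f. \<lambda>i\<in>{..<length w}. \<phi> (f i)) ` weighted_maps w A vA"
proof -
  have range: "h i \<in> \<phi> ` A" if "i < length w" for i
    using weighted_maps_positive[OF h w that] zero h that
    unfolding weighted_maps_def by fastforce
  define f where "f = (\<lambda>i\<in>{..<length w}. inv_into A \<phi> (h i))"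
  have fA: "f \<in> {..<length w} \<rightarrow>\<^sub>E A"
    using range by (auto simp: f_def inv_into_into)
  have hf: "h = (\<lambda>i\<in>{..<length w}. \<phi> (f i))"
    using range h
    by (auto simp: f_def fun_eq_iff f_inv_into_f weighted_maps_def PiE_def extensional_def)
  have "fibre_weight w f a = vA a" if "a \<in> A" for a
    using fibre_weight_restrict_comp[OF inj fA that] hf h val that into
    unfolding weighted_maps_def by auto
  with fA have "f \<in> weighted_maps w A vA"
    unfolding weighted_maps_def by auto
  with hf show ?thesis
    by blast
qed

lemma card_weighted_maps_reindex:
  assumes inj: "inj_on \<phi> A" and into: "\<phi> ` A \<subseteq> B"
    and val: "\<And>a. a \<in> A \<Longrightarrow> vB (\<phi> a) = vA a"
    and zero: "\<And>b. b \<in> B - \<phi> ` A \<Longrightarrow> vB b = 0"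
    and w: "0 \<notin> set w"
  shows "card (weighted_maps w A vA) = card (weighted_maps w B vB)"
proof -
  let ?F = "\<lambda>f. \<lambda>i\<in>{..<length w}. \<phi> (f i)"
  have "inj_on ?F (weighted_maps w A vA)"
    using inj_on_restrict_comp[OF inj] unfolding weighted_maps_def by (rule inj_on_subset) blast
  moreover have "?F ` weighted_maps w A vA = weighted_maps w B vB"
    using restrict_comp_in_weighted_maps[where vA = vA and vB = vB, OF inj into val zero]
      and weighted_maps_in_image_restrict_comp[where vA = vA and vB = vB, OF inj into val zero w]
    by blast
  ultimately show ?thesis
    by (metis card_image)
qed

lemma card_weighted_maps_distinct_list:
  assumes "distinct L" and "set L \<subseteq> B" and "\<And>b. b \<in> B - set L \<Longrightarrow> v b = 0"
    and "0 \<notin> set w"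
  shows "card (weighted_maps w {..<length L} (nth (map v L))) = card (weighted_maps w B v)"
  by (rule card_weighted_maps_reindex[where \<phi> = "nth L"])
    (use assms in \<open>auto simp: inj_on_nth set_conv_nth\<close>)

lemma fibre_weight_restrict [simp]:
  "fibre_weight w (restrict f {..<length w}) = fibre_weight w f"
  by (intro ext fibre_weight_cong) simp

definition fibre_matrix :: "nat list \<Rightarrow> nat \<Rightarrow> nat \<Rightarrow> (nat \<Rightarrow> nat \<times> nat) \<Rightarrow> nat list list" where
  "fibre_matrix w s t h = map (\<lambda>j. map (\<lambda>k. fibre_weight w h (j, k)) [0..<t]) [0..<s]"

lemma fibre_matrix_in_smats_iff:
  assumes h: "\<And>i. i < length w \<Longrightarrow> h i \<in> {..<length r} \<times> {..<length u}"
  shows "fibre_matrix w (length r) (length u) h \<in> smats r u \<longleftrightarrow>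
    (\<forall>j<length r. fibre_weight w (fst \<circ> h) j = r ! j) \<and>
    (\<forall>k<length u. fibre_weight w (snd \<circ> h) k = u ! k)"
proof -
  have "h = (\<lambda>i. ((fst \<circ> h) i, (snd \<circ> h) i))"
    by simp
  then have rows: "fibre_weight w (fst \<circ> h) j = (\<Sum>k<length u. fibre_weight w h (j, k))"
    and cols: "fibre_weight w (snd \<circ> h) k = (\<Sum>j<length r. fibre_weight w h (j, k))" for j k
    using fibre_weight_fst[of "{..<length u}" w "snd \<circ> h" "fst \<circ> h" j]
      fibre_weight_snd[of "{..<length r}" w "fst \<circ> h" "snd \<circ> h" k] h
    by (auto simp: mem_Times_iff)
  show ?thesis
    unfolding smats_def fibre_matrix_def
    by (simp add: rows cols sum_list_conv_sum_lessThan)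
qed

lemma inj_on_restrict_pair: "inj_on (\<lambda>(f, g). \<lambda>i\<in>I. (f i, g i)) ((I \<rightarrow>\<^sub>E A) \<times> (I \<rightarrow>\<^sub>E B))"
proof (rule inj_onI, clarify)
  fix f g f' g' assume f: "f \<in> I \<rightarrow>\<^sub>E A" and g: "g \<in> I \<rightarrow>\<^sub>E B"
    and f': "f' \<in> I \<rightarrow>\<^sub>E A" and g': "g' \<in> I \<rightarrow>\<^sub>E B"
    and eq: "(\<lambda>i\<in>I. (f i, g i)) = (\<lambda>i\<in>I. (f' i, g' i))"
  have same: "f i = f' i \<and> g i = g' i" if "i \<in> I" for i
    using fun_cong[OF eq, of i] that by simp
  show "f = f' \<and> g = g'"
    using PiE_ext[OF f f'] PiE_ext[OF g g'] same by blast
qed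

lemma grid_weighted_maps_marginals:
  assumes Z: "Z \<in> smats r u"
    and h: "h \<in> weighted_maps w ({..<length r} \<times> {..<length u}) (\<lambda>(j, k). Z ! j ! k)"
  shows "fibre_matrix w (length r) (length u) h = Z"
    and "restrict (fst \<circ> h) {..<length w} \<in> weighted_maps w {..<length r} (nth r)"
    and "restrict (snd \<circ> h) {..<length w} \<in> weighted_maps w {..<length u} (nth u)"
proof -
  have hJK: "\<And>i. i < length w \<Longrightarrow> h i \<in> {..<length r} \<times> {..<length u}"
    using h by (auto simp: weighted_maps_def)
  show matrix: "fibre_matrix w (length r) (length u) h = Z"
    using Z h by (intro nth_equalityI) (auto simp: fibre_matrix_def smats_def weighted_maps_def)
  with Z have "\<forall>j<length r. fibre_weight w (fst \<circ> h) j = r ! j"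
    and "\<forall>k<length u. fibre_weight w (snd \<circ> h) k = u ! k"
    using fibre_matrix_in_smats_iff[OF hJK] by auto
  with hJK show "restrict (fst \<circ> h) {..<length w} \<in> weighted_maps w {..<length r} (nth r)"
    and "restrict (snd \<circ> h) {..<length w} \<in> weighted_maps w {..<length u} (nth u)"
    by (auto simp: weighted_maps_def mem_Times_iff)
qed

(* A pair of maps (f, g) is the same as the map i \<mapsto> (f i, g i) into the grid of index pairs,
   and the matrix of its fibre weights has row sums r and column sums u. *)
lemma card_weighted_maps_times:
  "card (weighted_maps w {..<length r} (nth r)) * card (weighted_maps w {..<length u} (nth u)) =
    (\<Sum>Z\<in>smats r u. card (weighted_maps w ({..<length r} \<times> {..<length u}) (\<lambda>(j, k). Z ! j ! k)))"
proof -
  let ?I = "{..<length w}" and ?J = "{..<length r}" and ?K = "{..<length u}"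
  let ?A = "weighted_maps w ?J (nth r) \<times> weighted_maps w ?K (nth u)"
  let ?M = "\<lambda>Z. weighted_maps w (?J \<times> ?K) (\<lambda>(j, k). Z ! j ! k)"
  let ?pair = "\<lambda>(f, g). \<lambda>i\<in>?I. (f i, g i)"
  let ?F = "\<lambda>fg. (fibre_matrix w (length r) (length u) (?pair fg), ?pair fg)"
  have "inj_on ?pair ?A"
    by (rule inj_on_subset[OF inj_on_restrict_pair]) (auto simp: weighted_maps_def)
  then have "inj_on ?F ?A"
    by (auto simp: inj_on_def)
  moreover have "?F ` ?A \<subseteq> Sigma (smats r u) ?M"
  proof safe
    fix f g assume f: "f \<in> weighted_maps w ?J (nth r)" and g: "g \<in> weighted_maps w ?K (nth u)"
    let ?h = "\<lambda>i\<in>?I. (f i, g i)"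
    have "fibre_weight w (fst \<circ> ?h) = fibre_weight w f"
      and "fibre_weight w (snd \<circ> ?h) = fibre_weight w g"
      by (auto intro!: ext fibre_weight_cong)
    with f g show "fibre_matrix w (length r) (length u) ?h \<in> smats r u"
      by (subst fibre_matrix_in_smats_iff) (auto simp: weighted_maps_def)
    show "?h \<in> ?M (fibre_matrix w (length r) (length u) ?h)"
      using f g by (auto simp: weighted_maps_def fibre_matrix_def)
  qed
  moreover have "Sigma (smats r u) ?M \<subseteq> ?F ` ?A"
  proof safe
    fix Z h assume Z: "Z \<in> smats r u" and h: "h \<in> ?M Z"
    note marginals = grid_weighted_maps_marginals[OF Z h]
    let ?f = "restrict (fst \<circ> h) ?I" and ?g = "restrict (snd \<circ> h) ?I"
    have "(?f, ?g) \<in> ?A"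
      using marginals(2,3) by simp
    moreover have pair: "?pair (?f, ?g) = h"
      using h by (auto simp: weighted_maps_def PiE_def extensional_def fun_eq_iff)
    then have "(Z, h) = ?F (?f, ?g)"
      by (simp only: pair marginals(1))
    ultimately show "(Z, h) \<in> ?F ` ?A"
      by (rule rev_image_eqI)
  qed
  ultimately have "bij_betw ?F ?A (Sigma (smats r u) ?M)"
    unfolding bij_betw_def by blast
  then have "card ?A = card (Sigma (smats r u) ?M)"
    by (rule bij_betw_same_card)
  also have "\<dots> = (\<Sum>Z\<in>smats r u. card (?M Z))"
    by (rule card_SigmaI) (auto intro: finite_smats finite_weighted_maps)
  finally show ?thesis
    by (simp only: card_cartesian_product)
qed

lemma unit_rows_in_smats_iff:
  assumes "\<And>i. i < length w \<Longrightarrow> f i < length v"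
  shows "map (\<lambda>i. unit_row (f i) (w ! i) (length v)) [0..<length w] \<in> smats w v \<longleftrightarrow>
    (\<forall>k<length v. fibre_weight w f k = v ! k)"
proof -
  have "(\<Sum>i<length w. unit_row (f i) (w ! i) (length v) ! k) = fibre_weight w f k"
    if "k < length v" for k
    unfolding fibre_weight_def using that by (intro sum.cong) (auto simp: nth_unit_row)
  then show ?thesis
    using assms by (auto simp: smats_def sum_list_unit_row)
qed

lemma inj_on_unit_rows:
  assumes "0 \<notin> set w"
  shows "inj_on (\<lambda>f. map (\<lambda>i. unit_row (f i) (w ! i) t) [0..<length w]) ({..<length w} \<rightarrow>\<^sub>E {..<t})"
proof (rule inj_onI, rule PiE_ext)
  fix f g i assume "f \<in> {..<length w} \<rightarrow>\<^sub>E {..<t}" and i: "i \<in> {..<length w}"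
    and eq: "map (\<lambda>i. unit_row (f i) (w ! i) t) [0..<length w] =
      map (\<lambda>i. unit_row (g i) (w ! i) t) [0..<length w]"
  then have "unit_row (f i) (w ! i) t = unit_row (g i) (w ! i) t" and "f i < t"
    using arg_cong[OF eq, of "\<lambda>Y. Y ! i"] by auto
  moreover have "w ! i \<noteq> 0"
    using i assms by (metis lessThan_iff nth_mem)
  ultimately show "f i = g i"
    by (rule unit_row_inject)
qed

(* A matrix Z in S(w, v) with c(Z) = w has a single nonzero entry in each row i, namely w_i; its
   column records where the part w_i is sent. *)
lemma mcoef_diag_eq_card_weighted_maps:
  assumes w: "0 \<notin> set w"
  shows "mcoef w v w = card (weighted_maps w {..<length v} (nth v))"
proof -
  let ?s = "length w" and ?t = "length v"
  let ?F = "\<lambda>f. map (\<lambda>i. unit_row (f i) (w ! i) ?t) [0..<?s]"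
  let ?C = "weighted_maps w {..<?t} (nth v)"
  have "inj_on ?F ?C"
    using w by (intro inj_on_subset[OF inj_on_unit_rows]) (auto simp: weighted_maps_def)
  moreover have "?F ` ?C \<subseteq> {Y \<in> smats w v. cZ Y = w}"
  proof safe
    fix f assume f: "f \<in> ?C"
    then have "\<And>i. i < ?s \<Longrightarrow> f i < ?t"
      unfolding weighted_maps_def by auto
    with f show "?F f \<in> smats w v"
      by (subst unit_rows_in_smats_iff) (auto simp: weighted_maps_def)
    show "cZ (?F f) = w"
      by (rule cZ_unit_rows) (use f w in \<open>auto simp: weighted_maps_def\<close>)
  qed
  moreover have "{Y \<in> smats w v. cZ Y = w} \<subseteq> ?F ` ?C"
  proof
    fix Y assume "Y \<in> {Y \<in> smats w v. cZ Y = w}"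
    then have Y: "Y \<in> smats w v" and "cZ Y = w"
      by auto
    then have "\<forall>i<?s. \<exists>j<?t. Y ! i = unit_row j (w ! i) ?t"
      using length_cZ_smats(2)[OF Y w] by simp
    then obtain f where f: "\<And>i. i < ?s \<Longrightarrow> f i < ?t \<and> Y ! i = unit_row (f i) (w ! i) ?t"
      by metis
    let ?g = "restrict f {..<?s}"
    have FY: "Y = ?F ?g"
      using Y f by (intro nth_equalityI) (auto simp: smats_def)
    have "?g \<in> ?C"
      using unit_rows_in_smats_iff[where f = ?g] f Y FY by (auto simp: weighted_maps_def)
    then show "Y \<in> ?F ` ?C"
      using FY by blast
  qed
  ultimately have "bij_betw ?F ?C {Y \<in> smats w v. cZ Y = w}"
    unfolding bij_betw_def by blast
  then show ?thesis
    unfolding mcoef_def by (simp add: bij_betw_same_card)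
qed

lemma concat_eq_map_product:
  assumes "length Z = s" and "\<And>j. j < s \<Longrightarrow> length (Z ! j) = t"
  shows "concat Z = map (\<lambda>(j, k). Z ! j ! k) (List.product [0..<s] [0..<t])"
proof -
  have "map (\<lambda>j. map (\<lambda>k. Z ! j ! k) [0..<t]) [0..<s] = Z"
    using assms by (auto intro!: nth_equalityI)
  then have "concat Z = concat (map (\<lambda>j. map (\<lambda>k. Z ! j ! k) [0..<t]) [0..<s])"
    by simp
  also have "\<dots> = map (\<lambda>(j, k). Z ! j ! k) (List.product [0..<s] [0..<t])"
    by (simp add: product_concat_map map_concat comp_def)
  finally show ?thesis .
qed

(* c(Z) lists the nonzero entries of Z; the zero entries are irrelevant as targets because every
   part of w has positive weight. *)
lemma mcoef_diag_cZ:
  assumes Z: "Z \<in> smats a b" and w: "0 \<notin> set w"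
  shows "mcoef w (cZ Z) w =
    card (weighted_maps w ({..<length a} \<times> {..<length b}) (\<lambda>(j, k). Z ! j ! k))"
proof -
  let ?v = "\<lambda>(j, k). Z ! j ! k"
  let ?L = "filter (\<lambda>c. ?v c \<noteq> 0) (List.product [0..<length a] [0..<length b])"
  have "concat Z = map ?v (List.product [0..<length a] [0..<length b])"
    using Z by (intro concat_eq_map_product) (auto simp: smats_def)
  then have "cZ Z = map ?v ?L"
    unfolding cZ_def by (simp add: filter_map comp_def)
  then have "mcoef w (cZ Z) w = card (weighted_maps w {..<length ?L} (nth (map ?v ?L)))"
    using mcoef_diag_eq_card_weighted_maps[OF w] by simp
  also have "\<dots> = card (weighted_maps w ({..<length a} \<times> {..<length b}) ?v)"
    by (rule card_weighted_maps_distinct_list) (auto simp: distinct_product w)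
  finally show ?thesis .
qed

lemma mcoef_diag_mult:
  assumes a: "a \<in> comps n" and b: "b \<in> comps n" and w: "w \<in> comps n"
  shows "(\<Sum>r\<in>comps n. mcoef a b r * mcoef w r w) = mcoef w a w * mcoef w b w"
proof -
  have w0: "0 \<notin> set w"
    using w by (simp add: comps_def)
  have "(\<Sum>r\<in>comps n. mcoef a b r * mcoef w r w) =
      (\<Sum>r\<in>comps n. \<Sum>Z\<in>{Z \<in> smats a b. cZ Z = r}. mcoef w (cZ Z) w)"
    unfolding mcoef_def[of a b] by (rule sum.cong) auto
  also have "\<dots> = (\<Sum>Z\<in>smats a b. mcoef w (cZ Z) w)"
    by (rule sum.group) (use finite_smats finite_comps cZ_in_comps[OF a] in auto)
  also have "\<dots> = (\<Sum>Z\<in>smats a b.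
      card (weighted_maps w ({..<length a} \<times> {..<length b}) (\<lambda>(j, k). Z ! j ! k)))"
    by (rule sum.cong[OF refl]) (rule mcoef_diag_cZ[OF _ w0])
  also have "\<dots> = mcoef w a w * mcoef w b w"
    by (simp add: card_weighted_maps_times mcoef_diag_eq_card_weighted_maps[OF w0])
  finally show ?thesis .
qed

lemma mcoef_diag_single:
  assumes "w \<in> comps n"
  shows "mcoef w [n] w = 1"
proof -
  have "weighted_maps w {..<1} (nth [n]) = {\<lambda>i\<in>{..<length w}. 0}"
    using assms
    by (auto simp: weighted_maps_def comps_def fibre_weight_def sum_list_conv_sum_lessThan
        PiE_def extensional_def fun_eq_iff)
  with assms show ?thesis
    by (simp add: mcoef_diag_eq_card_weighted_maps comps_def)
qed

(* The integer coefficient of B_w in B_w f. *)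
definition diag_char :: "nat \<Rightarrow> nat list \<Rightarrow> (nat list \<Rightarrow> int) \<Rightarrow> int" where
  "diag_char n w f = (\<Sum>r\<in>comps n. f r * int (mcoef w r w))"

lemma diag_char_cong:
  "(\<And>r. r \<in> comps n \<Longrightarrow> [f r = g r] (mod m)) \<Longrightarrow> [diag_char n w f = diag_char n w g] (mod m)"
  unfolding diag_char_def by (intro cong_sum cong_mult cong_refl)

lemma diag_char_smult:
  assumes w: "w \<in> comps n"
  shows "[diag_char n w (smult n p f g) = diag_char n w f * diag_char n w g] (mod int p)"
proof -
  let ?c = "\<lambda>r. int (mcoef w r w)"
  let ?fg = "\<lambda>r. \<Sum>a\<in>comps n. \<Sum>b\<in>comps n. f a * g b * int (mcoef a b r)"
  have "diag_char n w ?fg =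
      (\<Sum>r\<in>comps n. \<Sum>a\<in>comps n. \<Sum>b\<in>comps n. f a * g b * (int (mcoef a b r) * ?c r))"
    unfolding diag_char_def by (simp add: sum_distrib_right mult.assoc)
  also have "\<dots> = (\<Sum>a\<in>comps n. \<Sum>r\<in>comps n. \<Sum>b\<in>comps n. f a * g b * (int (mcoef a b r) * ?c r))"
    by (rule sum.swap)
  also have "\<dots> = (\<Sum>a\<in>comps n. \<Sum>b\<in>comps n. \<Sum>r\<in>comps n. f a * g b * (int (mcoef a b r) * ?c r))"
    by (rule sum.cong[OF refl], rule sum.swap)
  also have "\<dots> = (\<Sum>a\<in>comps n. \<Sum>b\<in>comps n.
      f a * g b * int (\<Sum>r\<in>comps n. mcoef a b r * mcoef w r w))"
    by (simp add: sum_distrib_left)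
  also have "\<dots> = (\<Sum>a\<in>comps n. \<Sum>b\<in>comps n. (f a * ?c a) * (g b * ?c b))"
    using w by (intro sum.cong refl) (simp add: mcoef_diag_mult)
  also have "\<dots> = diag_char n w f * diag_char n w g"
    unfolding diag_char_def by (simp add: sum_product)
  finally have "diag_char n w ?fg = diag_char n w f * diag_char n w g" .
  moreover have "[diag_char n w (smult n p f g) = diag_char n w ?fg] (mod int p)"
    by (rule diag_char_cong) (simp add: smult_def cong_def)
  ultimately show ?thesis
    by simp
qed

lemma diag_char_sone:
  assumes "w \<in> comps n" and "n \<ge> 1" and "p \<ge> 2"
  shows "diag_char n w (sone n p) = 1"
proof -
  have "[n] \<in> comps n"
    using assms(2) by (simp add: comps_def)
  have "diag_char n w (sone n p) = (\<Sum>r\<in>comps n. if r = [n] then int (mcoef w r w) else 0)"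
    unfolding diag_char_def sone_def using assms(3) by (intro sum.cong) auto
  also have "\<dots> = 1"
    using \<open>[n] \<in> comps n\<close> assms(1) by (simp add: finite_comps mcoef_diag_single)
  finally show ?thesis .
qed

lemma diag_char_ssub:
  "[diag_char n w (ssub n p f g) = diag_char n w f - diag_char n w g] (mod int p)"
proof -
  have "[diag_char n w (ssub n p f g) = diag_char n w (\<lambda>r. f r - g r)] (mod int p)"
    by (rule diag_char_cong) (simp add: ssub_def cong_def)
  then show ?thesis
    unfolding diag_char_def by (simp add: sum_subtractf left_diff_distrib)
qed

lemma diag_char_ssmul:
  "[diag_char n w (ssmul n p c f) = c * diag_char n w f] (mod int p)"
proof -
  have "[diag_char n w (ssmul n p c f) = diag_char n w (\<lambda>r. c * f r)] (mod int p)"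
    by (rule diag_char_cong) (simp add: ssmul_def cong_def)
  then show ?thesis
    unfolding diag_char_def by (simp add: sum_distrib_left mult.assoc)
qed

lemma diag_char_jrad:
  assumes x: "x \<in> jrad n p" and w: "w \<in> comps n" and n: "n \<ge> 1" and p: "prime p"
  shows "[diag_char n w x = 0] (mod int p)"
proof (rule ccontr)
  let ?\<chi> = "diag_char n w" and ?one = "sone n p"
  have p2: "p \<ge> 2"
    using p prime_ge_2_nat by blast
  have one: "?\<chi> ?one = 1"
    using w n p2 by (rule diag_char_sone)
  assume "\<not> [?\<chi> x = 0] (mod int p)"
  then have "coprime (?\<chi> x) (int p)"
    using p by (simp add: cong_0_iff prime_imp_coprime coprime_commute)
  then obtain c where c: "[?\<chi> x * c = 1] (mod int p)"
    using cong_solve_coprime_int by blast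
  define y where "y = ssmul n p c ?one"
  have "y \<in> sig n p"
    using p2 by (auto simp: y_def sig_def ssmul_def)
  then obtain z where z: "smult n p z (ssub n p ?one (smult n p y x)) = ?one"
    using x unfolding jrad_def by blast
  have "[?\<chi> y = c] (mod int p)"
    using diag_char_ssmul[of n w p c ?one] one by (simp add: y_def)
  then have "[?\<chi> ?one - ?\<chi> (smult n p y x) = 1 - c * ?\<chi> x] (mod int p)"
    using one by (intro cong_diff cong_trans[OF diag_char_smult[OF w]] cong_mult cong_refl) auto
  then have "[?\<chi> (ssub n p ?one (smult n p y x)) = 1 - c * ?\<chi> x] (mod int p)"
    by (rule cong_trans[OF diag_char_ssub])
  also have "[1 - c * ?\<chi> x = 0] (mod int p)"
    using cong_diff[OF cong_refl[of 1] c] by (simp add: mult.commute)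
  finally have "[?\<chi> z * ?\<chi> (ssub n p ?one (smult n p y x)) = ?\<chi> z * 0] (mod int p)"
    by (rule cong_mult[OF cong_refl])
  moreover have "[1 = ?\<chi> z * ?\<chi> (ssub n p ?one (smult n p y x))] (mod int p)"
    using diag_char_smult[OF w, of p z "ssub n p ?one (smult n p y x)"] z one by simp
  ultimately have "[1 = 0] (mod int p)"
    by (simp add: cong_trans)
  with p2 show False
    by (simp add: cong_def)
qed

lemma smult_Yspace_jrad:
  assumes y: "y \<in> Yspace n p m" and x: "x \<in> jrad n p" and n: "n \<ge> 1" and p: "prime p"
  shows "smult n p y x \<in> Yspace n p (m + 1)"
proof -
  have p0: "int p > 0"
    using p prime_gt_0_nat by simp
  have "smult n p y x w = 0" if w: "w \<in> comps n" "length w \<le> m" for w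
  proof -
    let ?S = "\<lambda>q. \<Sum>r\<in>comps n. y q * x r * int (mcoef q r w)"
    have "y q * x r * int (mcoef q r w) = 0" if q: "q \<in> comps n" "q \<noteq> w" for q r
    proof (cases "mcoef q r w = 0")
      case False
      then have "length q < m"
        using mcoef_triangular[OF q(1) False] q(2) w(2) by fastforce
      then show ?thesis
        using y unfolding Yspace_def by simp
    qed simp
    then have "(\<Sum>q\<in>comps n - {w}. ?S q) = 0"
      by (intro sum.neutral ballI) (simp del: mult_eq_0_iff)
    then have "(\<Sum>q\<in>comps n. ?S q) = ?S w"
      using sum.remove[OF finite_comps w(1), of ?S] by simp
    also have "\<dots> = y w * diag_char n w x"
      unfolding diag_char_def by (simp add: sum_distrib_left mult.assoc)
    finally show ?thesis
      using cong_mult[OF cong_refl diag_char_jrad[OF x w(1) n p], of "y w"] w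
      by (simp add: smult_def cong_def)
  qed
  then show ?thesis
    using p0 by (auto simp: Yspace_def sig_def smult_def)
qed

theorem lemma3p1:
  fixes n p m :: nat
  assumes "n \<ge> 1" and "prime p" and "m \<ge> 1"
  shows "prodspan n p (Yspace n p m) (jrad n p) \<subseteq> Yspace n p (m + 1)"
proof
  have p0: "int p > 0"
    using assms(2) prime_gt_0_nat by simp
  fix f assume "f \<in> prodspan n p (Yspace n p m) (jrad n p)"
  then show "f \<in> Yspace n p (m + 1)"
  proof induction
    case zero
    show ?case
      using p0 by (simp add: Yspace_def sig_def szero_def)
  next
    case (prod y x)
    then show ?case
      using smult_Yspace_jrad assms(1,2) by blast
  next
    case (add a b)
    then show ?case
      using p0 by (auto simp: Yspace_def sig_def sadd_def)
  next
    case (smul a c)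
    then show ?case
      using p0 by (auto simp: Yspace_def sig_def ssmul_def)
  qed
qed

end
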